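(* For every finite graph $G$ with at least one vertex there exists an Eulerian subgraph $G'$ of $G$ such that $$\frac{|E(G')|}{|V(G')|}\ \ge\ \frac{|E(G)|+1}{|V(G)|}-1.$$
   Context: A graph is Eulerian if it is connected and every vertex has even degree (a single vertex with no edges counts as Eulerian). *)

theory Defs
  imports Complex_Main
begin

definition graph :: "'a set \<Rightarrow> 'a set set \<Rightarrow> bool" where
  "graph V E \<longleftrightarrow> finite V \<and> (\<forall>e\<in>E. e \<subseteq> V \<and> card e = 2)"

definition subgraph :: "'a set \<Rightarrow> 'a set set \<Rightarrow> 'a set \<Rightarrow> 'a set set \<Rightarrow> bool" where
  "subgraph V' E' V E \<longleftrightarrow> graph V' E' \<and> V' \<subseteq> V \<and> E' \<subseteq> E"

definition degree :: "'a set set \<Rightarrow> 'a \<Rightarrow> nat" where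
  "degree E v = card {e\<in>E. v \<in> e}"

definition adj :: "'a set set \<Rightarrow> 'a \<Rightarrow> 'a \<Rightarrow> bool" where
  "adj E u v \<longleftrightarrow> {u, v} \<in> E"

definition connected_graph :: "'a set \<Rightarrow> 'a set set \<Rightarrow> bool" where
  "connected_graph V E \<longleftrightarrow> V \<noteq> {} \<and> (\<forall>u\<in>V. \<forall>v\<in>V. (adj E)\<^sup>*\<^sup>* u v)"

text \<open>Eulerian: connected and every vertex has even degree (a single vertex counts).\<close>
definition eulerian :: "'a set \<Rightarrow> 'a set set \<Rightarrow> bool" where
  "eulerian V E \<longleftrightarrow> connected_graph V E \<and> (\<forall>v\<in>V. even (degree E v))"

end

theory Submission
  imports Defs
begin

text \<open>Let H be an even subgraph of G (all degrees even) with as many edges as possible.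
  The remaining edges contain no nonempty even subgraph, i.e. they form a forest, so there are
  fewer than |V| of them and |E(H)| > |E| - |V|. Every connected component of H is Eulerian, and
  by the mediant inequality some component has edge density at least that of H, which is at
  least |E(H)| / |V|. If H has no edges, a single vertex serves as the Eulerian subgraph.\<close>

lemma graph_finite_edges: "graph V E \<Longrightarrow> finite E"
  unfolding graph_def by (meson Pow_iff finite_Pow_iff finite_subset subsetI)

lemma degree_eq_0_if_notin: "v \<notin> \<Union>H \<Longrightarrow> degree H v = 0"
  unfolding degree_def by (metis (mono_tags, lifting) UnionI card.empty empty_Collect_eq)

lemma finite_Union_edges:
  assumes "finite H" "\<forall>e\<in>H. card e = 2"
  shows "finite (\<Union>H)"
  using assms by (intro finite_Union) (auto intro: card_ge_0_finite)

lemma card_Union_edges_pos: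
  assumes "finite H" "\<forall>e\<in>H. card e = 2" "H \<noteq> {}"
  shows "card (\<Union>H) > 0"
proof -
  from assms(3) obtain e where "e \<in> H" by blast
  with assms(2) have "\<Union>H \<noteq> {}" by fastforce
  then show ?thesis
    using finite_Union_edges[OF assms(1,2)] by (simp add: card_gt_0_iff)
qed

lemma degree_Un_disjoint:
  assumes "finite S" "finite T" "S \<inter> T = {}"
  shows "degree (S \<union> T) v = degree S v + degree T v"
proof -
  have "{e\<in>S \<union> T. v \<in> e} = {e\<in>S. v \<in> e} \<union> {e\<in>T. v \<in> e}" by auto
  then show ?thesis
    unfolding degree_def using assms by (simp add: card_Un_disjoint disjoint_iff)
qed

lemma even_degree_sym_diff_iff:
  assumes "finite S" "finite T"
  shows "even (degree (sym_diff S T) v) \<longleftrightarrow> (even (degree S v) \<longleftrightarrow> even (degree T v))"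
proof -
  have "S = (S - T) \<union> (S \<inter> T)" "T = (T - S) \<union> (S \<inter> T)" by auto
  then have "degree S v = degree (S - T) v + degree (S \<inter> T) v"
    "degree T v = degree (T - S) v + degree (S \<inter> T) v"
    using assms by (metis degree_Un_disjoint Int_Diff_disjoint finite_Diff
        finite_Int inf_commute)+
  moreover have "degree ((S - T) \<union> (T - S)) v = degree (S - T) v + degree (T - S) v"
    using assms by (intro degree_Un_disjoint) auto
  ultimately show ?thesis by auto
qed

lemma sum_degree_eq_twice_card:
  assumes "finite V" "finite S" "\<forall>e\<in>S. e \<subseteq> V \<and> card e = 2"
  shows "(\<Sum>v\<in>V. degree S v) = 2 * card S"
proof -
  have "(\<Sum>v\<in>V. degree S v) = (\<Sum>v\<in>V. \<Sum>e\<in>S. if v \<in> e then 1 else 0)"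
    unfolding degree_def using assms(2) by (simp add: sum.If_cases Int_def conj_commute)
  also have "\<dots> = (\<Sum>e\<in>S. \<Sum>v\<in>V. if v \<in> e then 1 else 0)"
    by (rule sum.swap)
  also have "\<dots> = (\<Sum>e\<in>S. card e)"
    using assms by (intro sum.cong) (auto simp: sum.If_cases Int_absorb1 Int_def[symmetric])
  also have "\<dots> = 2 * card S"
    using assms(3) by simp
  finally show ?thesis .
qed

lemma even_card_odd_degree_vertices:
  assumes "finite V" "finite S" "\<forall>e\<in>S. e \<subseteq> V \<and> card e = 2"
  shows "even (card {v\<in>V. odd (degree S v)})"
  using sum_degree_eq_twice_card[OF assms] even_sum_iff[OF assms(1), of "degree S"] by simp

lemma eq_if_Diff_singleton_eq_even_card:
  assumes "finite A" "finite B" "even (card A)" "even (card B)" "A - {x} = B - {x}"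
  shows "A = B"
proof (rule ccontr)
  assume "A \<noteq> B"
  then have "A = insert x B \<and> x \<notin> B \<or> B = insert x A \<and> x \<notin> A"
    using assms(5) by blast
  then show False
    using assms(1-4) by auto
qed

lemma inj_on_odd_degree_vertices:
  assumes "finite R" "\<forall>e\<in>R. e \<subseteq> V"
    and no_even: "\<And>C. C \<subseteq> R \<Longrightarrow> \<forall>v. even (degree C v) \<Longrightarrow> C = {}"
  shows "inj_on (\<lambda>S. {v\<in>V. odd (degree S v)}) (Pow R)"
proof (rule inj_onI)
  fix S T assume S: "S \<in> Pow R" and T: "T \<in> Pow R"
    and eq: "{v\<in>V. odd (degree S v)} = {v\<in>V. odd (degree T v)}"
  have fin: "finite S" "finite T"
    using S T assms(1) finite_subset by auto
  have "even (degree (sym_diff S T) v)" for v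
  proof (cases "v \<in> V")
    case True
    then have "odd (degree S v) \<longleftrightarrow> odd (degree T v)"
      using eq by blast
    then show ?thesis
      using fin by (simp add: even_degree_sym_diff_iff)
  next
    case False
    then have "v \<notin> \<Union>(sym_diff S T)"
      using S T assms(2) by blast
    then show ?thesis
      by (simp add: degree_eq_0_if_notin)
  qed
  then have "sym_diff S T = {}"
    using S T by (intro no_even) auto
  then show "S = T" by blast
qed

lemma card_lt_if_no_even_subgraph:
  assumes "finite V" "V \<noteq> {}" "finite R" "\<forall>e\<in>R. e \<subseteq> V \<and> card e = 2"
    and no_even: "\<And>C. C \<subseteq> R \<Longrightarrow> \<forall>v. even (degree C v) \<Longrightarrow> C = {}"
  shows "card R < card V"
proof -
  obtain v0 where v0: "v0 \<in> V" using assms(2) by auto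
  define odd_vertices where "odd_vertices S = {v\<in>V. odd (degree S v)}" for S
  \<comment> \<open>A set of odd vertices has even size, so it is determined by its trace on V - {v0}.\<close>
  have parity: "finite X" "even (card X)" if "X \<in> odd_vertices ` Pow R" for X
    using that assms(1,3,4) finite_subset
    by (auto simp: odd_vertices_def intro!: even_card_odd_degree_vertices)
  have "inj_on (\<lambda>X. X - {v0}) (odd_vertices ` Pow R)"
  proof (rule inj_onI)
    fix X Y assume X: "X \<in> odd_vertices ` Pow R" and Y: "Y \<in> odd_vertices ` Pow R"
      and "X - {v0} = Y - {v0}"
    then show "X = Y"
      using parity[OF X] parity[OF Y] eq_if_Diff_singleton_eq_even_card[of X Y v0] by simp
  qed
  then have "inj_on (\<lambda>S. odd_vertices S - {v0}) (Pow R)"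
    using comp_inj_on[OF inj_on_odd_degree_vertices[OF assms(3) _ no_even]] assms(4)
    unfolding odd_vertices_def comp_def by blast
  moreover have "(\<lambda>S. odd_vertices S - {v0}) ` Pow R \<subseteq> Pow (V - {v0})"
    unfolding odd_vertices_def by auto
  ultimately have "card (Pow R) \<le> card (Pow (V - {v0}))"
    using assms(1) by (intro card_inj_on_le) auto
  then have "card R \<le> card (V - {v0})"
    using assms(1,3) by (simp add: card_Pow)
  moreover have "card V > 0"
    using assms(1) v0 card_gt_0_iff by blast
  ultimately show ?thesis
    using v0 by (simp add: card_Diff_singleton)
qed

lemma exists_large_even_subgraph:
  assumes "graph V E" "V \<noteq> {}"
  obtains H where "H \<subseteq> E" "\<forall>v. even (degree H v)" "card E < card H + card V"
proof -
  have fin: "finite V" "finite E" and edges: "\<forall>e\<in>E. e \<subseteq> V \<and> card e = 2"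
    using assms(1) graph_finite_edges unfolding graph_def by auto
  define even_subgraph where "even_subgraph H \<longleftrightarrow> H \<subseteq> E \<and> (\<forall>v. even (degree H v))" for H
  have "even_subgraph {}" unfolding even_subgraph_def degree_def by simp
  moreover have "\<forall>H. even_subgraph H \<longrightarrow> card H < card E + 1"
    unfolding even_subgraph_def using fin(2) by (simp add: card_mono less_Suc_eq_le)
  ultimately obtain H where H: "even_subgraph H"
    and H_max: "\<forall>H'. even_subgraph H' \<longrightarrow> card H' \<le> card H"
    using Lattices_Big.ex_has_greatest_nat[of even_subgraph "{}" card] by blast
  have "H \<subseteq> E" and H_even: "\<forall>v. even (degree H v)"
    using H unfolding even_subgraph_def by auto
  then have finH: "finite H" using fin(2) finite_subset by blast
  have "card (E - H) < card V"
  proof (rule card_lt_if_no_even_subgraph[OF fin(1) assms(2)])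
    fix C assume C: "C \<subseteq> E - H" "\<forall>v. even (degree C v)"
    have finC: "finite C" using C(1) fin(2) finite_subset by blast
    have disj: "H \<inter> C = {}" using C(1) by blast
    have "even_subgraph (H \<union> C)"
      unfolding even_subgraph_def
      using C \<open>H \<subseteq> E\<close> H_even degree_Un_disjoint[OF finH finC disj] by auto
    then have "card (H \<union> C) \<le> card H"
      using H_max by blast
    then have "card H + card C \<le> card H"
      by (simp add: card_Un_disjoint[OF finH finC disj])
    then show "C = {}" using finC by simp
  qed (use fin edges in auto)
  moreover have "card E = card H + card (E - H)"
    using \<open>H \<subseteq> E\<close> fin(2) finH by (simp add: card_Diff_subset card_mono)
  ultimately show thesis using that \<open>H \<subseteq> E\<close> H_even by simp
qed

definition component_edges :: "'a set set \<Rightarrow> 'a \<Rightarrow> 'a set set" where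
  "component_edges H a = {e\<in>H. \<forall>x\<in>e. (adj H)\<^sup>*\<^sup>* a x}"

definition edge_density :: "'a set set \<Rightarrow> real" where
  "edge_density H = real (card H) / real (card (\<Union>H))"

lemma component_edges_subset: "component_edges H a \<subseteq> H"
  unfolding component_edges_def by blast

lemma symp_adj: "symp (adj H)"
  unfolding symp_def adj_def by (simp add: insert_commute)

lemma rtranclp_adj_sym: "(adj H)\<^sup>*\<^sup>* u v \<Longrightarrow> (adj H)\<^sup>*\<^sup>* v u"
  using symp_rtranclp[OF symp_adj] by (rule sympD)

lemma rtranclp_adj_edge:
  assumes "e \<in> H" "card e = 2" "x \<in> e" "y \<in> e"
  shows "(adj H)\<^sup>*\<^sup>* x y"
proof (cases "x = y")
  case False
  from assms(2) obtain p q where "e = {p, q}"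
    unfolding card_2_iff by blast
  with False assms(3,4) have "e = {x, y}" by auto
  with assms(1) have "adj H x y" unfolding adj_def by simp
  then show ?thesis by (rule r_into_rtranclp)
qed simp

lemma component_edges_closed:
  assumes "\<forall>e\<in>H. card e = 2" "e \<in> H" "x \<in> e" "(adj H)\<^sup>*\<^sup>* a x"
  shows "e \<in> component_edges H a"
  unfolding component_edges_def
proof (intro CollectI conjI ballI)
  fix y assume "y \<in> e"
  with assms(1-3) have "(adj H)\<^sup>*\<^sup>* x y" by (intro rtranclp_adj_edge) auto
  with assms(4) show "(adj H)\<^sup>*\<^sup>* a y" by (rule rtranclp_trans)
qed (fact assms(2))

lemma degree_component_edges:
  assumes "\<forall>e\<in>H. card e = 2"
  shows "degree (component_edges H a) v = (if (adj H)\<^sup>*\<^sup>* a v then degree H v else 0)"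
proof -
  have "{e \<in> component_edges H a. v \<in> e} =
      (if (adj H)\<^sup>*\<^sup>* a v then {e\<in>H. v \<in> e} else {})"
    using component_edges_closed[OF assms] unfolding component_edges_def by auto
  then show ?thesis
    unfolding degree_def by simp
qed

lemma rtranclp_adj_component_edges:
  "(adj H)\<^sup>*\<^sup>* a w \<Longrightarrow> (adj (component_edges H a))\<^sup>*\<^sup>* a w"
proof (induction rule: rtranclp_induct)
  case (step y z)
  have "(adj H)\<^sup>*\<^sup>* a z"
    using step.hyps by (rule rtranclp.rtrancl_into_rtrancl)
  with step.hyps have "adj (component_edges H a) y z"
    unfolding component_edges_def adj_def by auto
  with step.IH show ?case
    by (rule rtranclp.rtrancl_into_rtrancl)
qed simp

lemma eulerian_component_edges:
  assumes "\<forall>e\<in>H. card e = 2" "\<forall>v. even (degree H v)" "e \<in> H" "a \<in> e"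
  shows "eulerian (\<Union>(component_edges H a)) (component_edges H a)"
  unfolding eulerian_def connected_graph_def
proof (intro conjI ballI)
  have "e \<in> component_edges H a"
    using component_edges_closed[OF assms(1,3,4)] by simp
  then show "\<Union>(component_edges H a) \<noteq> {}"
    using assms(4) by blast
next
  fix x y assume "x \<in> \<Union>(component_edges H a)" "y \<in> \<Union>(component_edges H a)"
  then have "(adj H)\<^sup>*\<^sup>* a x" "(adj H)\<^sup>*\<^sup>* a y"
    unfolding component_edges_def by auto
  then show "(adj (component_edges H a))\<^sup>*\<^sup>* x y"
    by (meson rtranclp_adj_component_edges rtranclp_adj_sym rtranclp_trans)
next
  fix v show "even (degree (component_edges H a) v)"
    using assms(2) by (simp add: degree_component_edges[OF assms(1)])
qed

lemma Union_component_edges_disjoint: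
  assumes "\<forall>e\<in>H. card e = 2"
  shows "\<Union>(component_edges H a) \<inter> \<Union>(H - component_edges H a) = {}"
  using component_edges_closed[OF assms] unfolding component_edges_def by blast

lemma add_divide_add_le_max:
  fixes a b p q :: "'a :: linordered_field"
  assumes "p > 0" "q > 0"
  shows "(a + b) / (p + q) \<le> max (a / p) (b / q)"
proof -
  have "a \<le> max (a / p) (b / q) * p" "b \<le> max (a / p) (b / q) * q"
    using assms by (simp_all add: pos_divide_le_eq[symmetric])
  then have "a + b \<le> max (a / p) (b / q) * (p + q)"
    by (simp add: distrib_left)
  then show ?thesis
    using assms by (simp add: pos_divide_le_eq)
qed

lemma edge_density_Un_le_max:
  assumes "card (\<Union>A) > 0" "card (\<Union>B) > 0" "\<Union>A \<inter> \<Union>B = {}"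
  shows "edge_density (A \<union> B) \<le> max (edge_density A) (edge_density B)"
proof -
  have "card (\<Union>(A \<union> B)) = card (\<Union>A) + card (\<Union>B)"
    using assms by (simp add: card_Un_disjoint card_gt_0_iff)
  then have "edge_density (A \<union> B) = real (card (A \<union> B)) / real (card (\<Union>A) + card (\<Union>B))"
    unfolding edge_density_def by simp
  also have "\<dots> \<le> real (card A + card B) / real (card (\<Union>A) + card (\<Union>B))"
    by (intro divide_right_mono of_nat_mono card_Un_le) simp
  also have "\<dots> \<le> max (edge_density A) (edge_density B)"
    unfolding edge_density_def using assms by (simp add: add_divide_add_le_max)
  finally show ?thesis .
qed

lemma even_degree_Diff_component_edges:
  assumes "finite H" "\<forall>e\<in>H. card e = 2" "\<forall>v. even (degree H v)"
  shows "\<forall>v. even (degree (H - component_edges H a) v)"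
proof
  fix v
  let ?C = "component_edges H a"
  have "?C \<union> (H - ?C) = H"
    using component_edges_subset[of H a] by blast
  then have "degree H v = degree ?C v + degree (H - ?C) v"
    using degree_Un_disjoint[of ?C "H - ?C" v] finite_subset[OF component_edges_subset assms(1)]
      assms(1) by simp
  moreover have "even (degree ?C v)"
    using degree_component_edges[OF assms(2), of a v] assms(3) by simp
  ultimately show "even (degree (H - ?C) v)"
    using assms(3) by (metis even_add)
qed

lemma edge_density_le_max_component_edges:
  assumes "finite H" "\<forall>e\<in>H. card e = 2" "e \<in> H" "a \<in> e" "H - component_edges H a \<noteq> {}"
  shows "edge_density H \<le>
    max (edge_density (component_edges H a)) (edge_density (H - component_edges H a))"
proof -
  let ?C = "component_edges H a"
  have "e \<in> ?C"
    by (rule component_edges_closed[OF assms(2-4)]) simp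
  moreover have "finite ?C" "\<forall>e\<in>?C. card e = 2"
    using finite_subset[OF component_edges_subset assms(1)] component_edges_subset[of H a] assms(2)
    by blast+
  ultimately have "card (\<Union>?C) > 0"
    by (intro card_Union_edges_pos) auto
  moreover have "card (\<Union>(H - ?C)) > 0"
    using assms(1,2,5) by (intro card_Union_edges_pos) auto
  ultimately have "edge_density (?C \<union> (H - ?C)) \<le> max (edge_density ?C) (edge_density (H - ?C))"
    using Union_component_edges_disjoint[OF assms(2)] by (intro edge_density_Un_le_max)
  moreover have "?C \<union> (H - ?C) = H"
    using component_edges_subset[of H a] by blast
  ultimately show ?thesis by simp
qed

lemma even_graph_has_dense_eulerian_subgraph:
  assumes "finite H" "H \<noteq> {}" "\<forall>e\<in>H. card e = 2" "\<forall>v. even (degree H v)"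
  shows "\<exists>E'\<subseteq>H. eulerian (\<Union>E') E' \<and> edge_density H \<le> edge_density E'"
  using assms
proof (induction "card H" arbitrary: H rule: less_induct)
  case less
  from less.prems(2) obtain e where e: "e \<in> H" by blast
  with less.prems(3) have "card e = 2" by blast
  then obtain a where a: "a \<in> e" by force
  define C where "C = component_edges H a"
  have C_sub: "C \<subseteq> H"
    unfolding C_def by (rule component_edges_subset)
  have C_eulerian: "eulerian (\<Union>C) C"
    unfolding C_def by (rule eulerian_component_edges[OF less.prems(3,4) e a])
  show ?case
  proof (cases "H - C = {}")
    case True
    then have "H = C" using C_sub by blast
    then show ?thesis using C_eulerian by blast
  next
    case False
    have "e \<in> C"
      unfolding C_def by (rule component_edges_closed[OF less.prems(3) e a]) simp
    then have "card (H - C) < card H"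
      using e less.prems(1) by (intro psubset_card_mono) auto
    moreover have "finite (H - C)" "\<forall>e\<in>H - C. card e = 2"
      using less.prems(1,3) by auto
    moreover have "\<forall>v. even (degree (H - C) v)"
      unfolding C_def by (rule even_degree_Diff_component_edges[OF less.prems(1,3,4)])
    ultimately have "\<exists>E'\<subseteq>H - C. eulerian (\<Union>E') E' \<and> edge_density (H - C) \<le> edge_density E'"
      using False by (intro less.hyps) auto
    then obtain E' where E': "E' \<subseteq> H - C" "eulerian (\<Union>E') E'"
      "edge_density (H - C) \<le> edge_density E'"
      by blast
    have H_le_max: "edge_density H \<le> max (edge_density C) (edge_density (H - C))"
      unfolding C_def
      by (rule edge_density_le_max_component_edges[OF less.prems(1,3) e a False[unfolded C_def]])
    show ?thesis
    proof (cases "edge_density C \<le> edge_density (H - C)")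
      case True
      then show ?thesis
        using H_le_max E' by (intro exI[of _ E']) auto
    next
      case False
      then show ?thesis
        using H_le_max C_sub C_eulerian by (intro exI[of _ C]) auto
    qed
  qed
qed

lemma subgraph_Union_edges:
  assumes "graph V E" "E' \<subseteq> E"
  shows "subgraph (\<Union>E') E' V E"
proof -
  have "\<Union>E' \<subseteq> V"
    using assms unfolding graph_def by blast
  moreover from this have "finite (\<Union>E')"
    using assms(1) finite_subset unfolding graph_def by blast
  ultimately show ?thesis
    using assms unfolding subgraph_def graph_def by auto
qed

lemma eulerian_singleton: "eulerian {v} {}"
  unfolding eulerian_def connected_graph_def degree_def by simp

lemma card_div_card_le_edge_density:
  assumes "graph V H" "H \<noteq> {}"
  shows "real (card H) / real (card V) \<le> edge_density H"
proof -
  have H: "finite H" "\<forall>e\<in>H. card e = 2" and "\<Union>H \<subseteq> V" "finite V"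
    using assms(1) graph_finite_edges unfolding graph_def by blast+
  then show ?thesis
    unfolding edge_density_def
    using card_mono[OF \<open>finite V\<close> \<open>\<Union>H \<subseteq> V\<close>] card_Union_edges_pos[OF H assms(2)]
    by (intro divide_left_mono) auto
qed

theorem lemma3p3:
  fixes V :: "'a set" and E :: "'a set set"
  assumes "graph V E" and "V \<noteq> {}"
  shows "\<exists>V' E'. subgraph V' E' V E \<and> eulerian V' E' \<and>
           real (card E') / real (card V') \<ge> (real (card E) + 1) / real (card V) - 1"
proof -
  have V_pos: "card V > 0"
    using assms unfolding graph_def by (simp add: card_gt_0_iff)
  obtain H where H: "H \<subseteq> E" "\<forall>v. even (degree H v)" "card E < card H + card V"
    using exists_large_even_subgraph[OF assms] .
  have "(real (card E) + 1) / real (card V) - 1 =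
      (real (card E) + 1 - real (card V)) / real (card V)"
    using V_pos by (simp add: diff_divide_distrib)
  also have "\<dots> \<le> real (card H) / real (card V)"
    using H(3) by (intro divide_right_mono) auto
  finally have bound: "(real (card E) + 1) / real (card V) - 1 \<le> real (card H) / real (card V)" .
  show ?thesis
  proof (cases "H = {}")
    case True
    from assms(2) obtain v where "v \<in> V" by blast
    then have "subgraph {v} {} V E"
      unfolding subgraph_def graph_def by simp
    moreover have "(real (card E) + 1) / real (card V) - 1 \<le> 0"
      using bound True by simp
    ultimately show ?thesis
      using eulerian_singleton[of v] by (intro exI[of _ "{v}"] exI[of _ "{}"]) simp
  next
    case False
    have "graph V H"
      using assms(1) H(1) unfolding graph_def by blast
    then have "finite H" "\<forall>e\<in>H. card e = 2"
      using graph_finite_edges unfolding graph_def by blast+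
    then obtain E' where E': "E' \<subseteq> H" "eulerian (\<Union>E') E'" "edge_density H \<le> edge_density E'"
      using even_graph_has_dense_eulerian_subgraph[OF _ False _ H(2)] by blast
    have "E' \<subseteq> E"
      using E'(1) H(1) by blast
    moreover have "(real (card E) + 1) / real (card V) - 1 \<le> edge_density E'"
      using bound card_div_card_le_edge_density[OF \<open>graph V H\<close> False] E'(3) by linarith
    ultimately show ?thesis
      using subgraph_Union_edges[OF assms(1)] E'(2) unfolding edge_density_def
      by (intro exI[of _ "\<Union>E'"] exI[of _ E']) simp
  qed
qed

end
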